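(* Let $X,Y$ be real-valued random variables on a probability space, let $\mu$ be the law of $(X,Y)$ on $\mathbb{R}^2$, $\mu_X,\mu_Y$ the laws of $X,Y$, and $\mu_{XY}=\mu_X\times\mu_Y$. If $\mu\ll\mu_{XY}$ and $L=\frac{d\mu}{d\mu_{XY}}$ is a version of the Radon–Nikodym derivative, then \[\mu_{XY}(\{(x,y)\in\mathbb{R}^2: L(x,y)>1\})<1\quad\text{and}\quad \mu_{XY}(\{(x,y)\in\mathbb{R}^2: L(x,y)<1\})<1.\]
   Context: $\mu_{XY}$ is the unique probability measure on the Borel sets of $\mathbb{R}^2$ with $\mu_{XY}(A\times B)=\mu_X(A)\mu_Y(B)$. *)

theory Defs
  imports "HOL-Probability.Probability"
begin

end

theory Submission
  imports Defs
begin

text \<open>Since \<open>\<mu>\<close> is a probability measure, \<open>L\<close> integrates to 1 against the probability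
  measure \<open>\<mu>\<^sub>X\<^sub>Y\<close>. If \<open>L > 1\<close> held \<open>\<mu>\<^sub>X\<^sub>Y\<close>-almost everywhere, strict monotonicity of
  the integral would give \<open>1 = \<integral> 1 < \<integral> L = 1\<close>; symmetrically for \<open>L < 1\<close>.\<close>

lemma nn_integral_eq_1_if_prob_space_density:
  assumes "f \<in> borel_measurable M" and "prob_space (density M f)"
  shows "(\<integral>\<^sup>+ x. f x \<partial>M) = 1"
proof -
  have "(\<integral>\<^sup>+ x. f x \<partial>M) = (\<integral>\<^sup>+ x. f x * indicator (space M) x \<partial>M)"
    by (rule nn_integral_cong) simp
  also have "\<dots> = emeasure (density M f) (space M)"
    using assms(1) by (simp add: emeasure_density)
  also have "\<dots> = 1"
    using prob_space.emeasure_space_1[OF assms(2)] by simp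
  finally show ?thesis .
qed

lemma (in prob_space) not_AE_gt_1_if_nn_integral_eq_1:
  assumes f: "f \<in> borel_measurable M" and int_f: "(\<integral>\<^sup>+ x. f x \<partial>M) = 1"
  shows "\<not> (AE x in M. f x > 1)"
proof
  assume gt: "AE x in M. f x > 1"
  have "\<not> (AE x in M. f x \<le> 1)"
  proof
    assume "AE x in M. f x \<le> 1"
    with gt have "AE x in M. False" by eventually_elim simp
    then show False by simp
  qed
  moreover have "AE x in M. 1 \<le> f x"
    using gt by eventually_elim simp
  ultimately have "(\<integral>\<^sup>+ x. 1 \<partial>M) < (\<integral>\<^sup>+ x. f x \<partial>M)"
    using f by (intro nn_integral_less) (simp_all add: emeasure_space_1)
  then show False
    using int_f by (simp add: emeasure_space_1)
qed

lemma (in prob_space) not_AE_lt_1_if_nn_integral_eq_1: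
  assumes f: "f \<in> borel_measurable M" and int_f: "(\<integral>\<^sup>+ x. f x \<partial>M) = 1"
  shows "\<not> (AE x in M. f x < 1)"
proof
  assume lt: "AE x in M. f x < 1"
  have "\<not> (AE x in M. 1 \<le> f x)"
  proof
    assume "AE x in M. 1 \<le> f x"
    with lt have "AE x in M. False" by eventually_elim simp
    then show False by simp
  qed
  moreover have "AE x in M. f x \<le> 1"
    using lt by eventually_elim simp
  ultimately have "(\<integral>\<^sup>+ x. f x \<partial>M) < (\<integral>\<^sup>+ x. 1 \<partial>M)"
    using f int_f by (intro nn_integral_less) simp_all
  then show False
    using int_f by (simp add: emeasure_space_1)
qed

lemma (in prob_space) prob_less_1_if_not_AE:
  assumes "{x \<in> space M. P x} \<in> events" and "\<not> (AE x in M. P x)"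
  shows "\<P>(x in M. P x) < 1"
  using assms prob_Collect_eq_1 prob_le_1 by (metis order_less_le)

lemma (in prob_space) prob_density_gt_1_and_lt_1_less_1:
  assumes f: "f \<in> borel_measurable M" and "(\<integral>\<^sup>+ x. f x \<partial>M) = 1"
  shows "\<P>(x in M. f x > 1) < 1 \<and> \<P>(x in M. f x < 1) < 1"
  using assms not_AE_gt_1_if_nn_integral_eq_1 not_AE_lt_1_if_nn_integral_eq_1
  by (intro conjI prob_less_1_if_not_AE) (auto intro: pred_sets2[OF _ f])

theorem proposition3:
  fixes M :: "'a measure" and X Y :: "'a \<Rightarrow> real"
    and L :: "real \<times> real \<Rightarrow> ennreal"
  assumes "prob_space M"
    and "X \<in> borel_measurable M" and "Y \<in> borel_measurable M"
    and "absolutely_continuous (distr M borel X \<Otimes>\<^sub>M distr M borel Y)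
           (distr M (borel \<Otimes>\<^sub>M borel) (\<lambda>\<omega>. (X \<omega>, Y \<omega>)))"
    and "L \<in> borel_measurable (distr M borel X \<Otimes>\<^sub>M distr M borel Y)"
    and "density (distr M borel X \<Otimes>\<^sub>M distr M borel Y) L
           = distr M (borel \<Otimes>\<^sub>M borel) (\<lambda>\<omega>. (X \<omega>, Y \<omega>))"
  shows "measure (distr M borel X \<Otimes>\<^sub>M distr M borel Y) {z. L z > 1} < 1
         \<and> measure (distr M borel X \<Otimes>\<^sub>M distr M borel Y) {z. L z < 1} < 1"
proof -
  let ?\<mu>\<^sub>X\<^sub>Y = "distr M borel X \<Otimes>\<^sub>M distr M borel Y"
  interpret M: prob_space M by fact
  interpret \<mu>\<^sub>X\<^sub>Y: prob_space ?\<mu>\<^sub>X\<^sub>Y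
    using assms(2,3) by (intro prob_space_pair M.prob_space_distr)
  have "prob_space (distr M (borel \<Otimes>\<^sub>M borel) (\<lambda>\<omega>. (X \<omega>, Y \<omega>)))"
    using assms(2,3) by (intro M.prob_space_distr) measurable
  then have "(\<integral>\<^sup>+ z. L z \<partial>?\<mu>\<^sub>X\<^sub>Y) = 1"
    using assms(5,6) by (intro nn_integral_eq_1_if_prob_space_density) simp_all
  then show ?thesis
    using \<mu>\<^sub>X\<^sub>Y.prob_density_gt_1_and_lt_1_less_1[OF assms(5)]
    by (simp add: space_pair_measure)
qed

end
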